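(* Let $r\in[0,1]^A$ be a reward vector, $\tau>0$, $\pi^*$ the deterministic policy putting all mass on an optimal action $a^*\in\arg\max_ar(a)$, and $\pi^*_\tau=\mathrm{softmax}(r/\tau)$, i.e. $\pi^*_\tau(a)=e^{r(a)/\tau}/\sum_{a'}e^{r(a')/\tau}$. Then $$(\pi^*-\pi^*_\tau)^\top r\le\tau\,W\Big(\frac{A-1}{e}\Big),$$ where $W:[0,\infty)\to[0,\infty)$ is the principal branch of the Lambert $W$ function, defined by $W(x)e^{W(x)}=x$. *)

theory Defs
  imports Complex_Main
begin

definition lambertW :: "real \<Rightarrow> real" where
  "lambertW x = (THE w. 0 \<le> w \<and> w * exp w = x)"

definition softmax_policy :: "('a::finite \<Rightarrow> real) \<Rightarrow> real \<Rightarrow> 'a \<Rightarrow> real" where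
  "softmax_policy r \<tau> a = exp (r a / \<tau>) / (\<Sum>a'\<in>UNIV. exp (r a' / \<tau>))"

definition det_policy :: "'a \<Rightarrow> 'a \<Rightarrow> real" where
  "det_policy b a = (if a = b then 1 else 0)"

end

theory Submission
  imports Defs
begin

text \<open>Let \<open>Z = \<Sum>a. exp (r a / \<tau>)\<close>, \<open>d a = (r(a\<^sup>*) - r a) / \<tau>\<close> and \<open>w = W ((A - 1) / e)\<close>,
  so that \<open>(A - 1) exp (-(w + 1)) = w\<close>. The gap is \<open>\<Sum>a. exp (r a / \<tau>) (r(a\<^sup>*) - r a) / Z\<close>, and
  subtracting \<open>\<tau> w Z\<close> it suffices that \<open>\<Sum>a. exp (-d a) (d a - w) \<le> 0\<close>. The optimal action
  contributes \<open>-w\<close>, and since \<open>t \<le> exp (t - 1)\<close> every one of the other \<open>A - 1\<close> actions contributes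
  at most \<open>exp (-(w + 1))\<close>; by the defining equation of \<open>w\<close> these cancel.\<close>

lemma mult_exp_strict_mono:
  fixes a b :: real
  assumes "0 \<le> a" "a < b"
  shows "a * exp a < b * exp b"
proof -
  have "a * exp a \<le> a * exp b" using assms by (intro mult_left_mono) auto
  also have "\<dots> < b * exp b" using assms by (intro mult_strict_right_mono) auto
  finally show ?thesis .
qed

lemma lambertW_times_exp:
  fixes x :: real
  assumes "0 \<le> x"
  shows "lambertW x * exp (lambertW x) = x"
proof -
  have "x \<le> x * exp x" using assms by (simp add: mult_le_cancel_left1)
  then have "\<exists>w. 0 \<le> w \<and> w \<le> x \<and> w * exp w = x"
    using assms by (intro IVT) (auto intro!: continuous_intros)
  moreover have "w = w'" if "0 \<le> w" "w * exp w = x" "0 \<le> w'" "w' * exp w' = x" for w w'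
    using that mult_exp_strict_mono[of w w'] mult_exp_strict_mono[of w' w]
    by (cases w w' rule: linorder_cases) auto
  ultimately have "\<exists>!w. 0 \<le> w \<and> w * exp w = x" by blast
  then have "0 \<le> lambertW x \<and> lambertW x * exp (lambertW x) = x"
    unfolding lambertW_def by (rule theI')
  then show ?thesis by simp
qed

lemma lambertW_fixed_point:
  fixes n :: real
  assumes "0 \<le> n"
  shows "n * exp (- (lambertW (n / exp 1) + 1)) = lambertW (n / exp 1)"
proof -
  define w where "w = lambertW (n / exp 1)"
  have "n * exp (- (w + 1)) = n / exp 1 * exp (- w)"
    by (simp add: exp_diff exp_minus field_simps)
  also have "\<dots> = w * exp w * exp (- w)"
    using assms by (simp add: w_def lambertW_times_exp)
  also have "\<dots> = w" by (simp add: exp_minus)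
  finally show ?thesis by (simp add: w_def)
qed

lemma diff_mult_exp_minus_le:
  fixes d w :: real
  shows "(d - w) * exp (- d) \<le> exp (- (w + 1))"
proof -
  have "(d - w) * exp (- d) \<le> exp (d - w - 1) * exp (- d)"
    using exp_ge_add_one_self[of "d - w - 1"] by (intro mult_right_mono) auto
  also have "\<dots> = exp (- (w + 1))" by (simp add: exp_add[symmetric])
  finally show ?thesis .
qed

lemma sum_det_policy:
  fixes f :: "'a::finite \<Rightarrow> real"
  shows "(\<Sum>a\<in>UNIV. det_policy b a * f a) = f b"
  by (simp add: det_policy_def if_distrib[where f = "\<lambda>x. x * _"] cong: if_cong)

lemma sum_softmax_policy:
  fixes r :: "'a::finite \<Rightarrow> real"
  shows "(\<Sum>a\<in>UNIV. softmax_policy r \<tau> a) = 1"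
proof -
  have "(\<Sum>a\<in>UNIV. exp (r a / \<tau>)) > 0" by (intro sum_pos) auto
  then show ?thesis by (simp add: softmax_policy_def sum_divide_distrib[symmetric])
qed

lemma policy_gap_eq_softmax_weighted_gap:
  fixes r :: "'a::finite \<Rightarrow> real"
  shows "(\<Sum>a\<in>UNIV. (det_policy b a - softmax_policy r \<tau> a) * r a)
    = (\<Sum>a\<in>UNIV. exp (r a / \<tau>) * (r b - r a)) / (\<Sum>a\<in>UNIV. exp (r a / \<tau>))"
proof -
  have "(\<Sum>a\<in>UNIV. (det_policy b a - softmax_policy r \<tau> a) * r a)
      = r b * (\<Sum>a\<in>UNIV. softmax_policy r \<tau> a) - (\<Sum>a\<in>UNIV. softmax_policy r \<tau> a * r a)"
    by (simp add: sum_softmax_policy sum_det_policy left_diff_distrib sum_subtractf)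
  also have "\<dots> = (\<Sum>a\<in>UNIV. softmax_policy r \<tau> a * (r b - r a))"
    by (simp add: sum_distrib_left right_diff_distrib sum_subtractf algebra_simps)
  also have "\<dots> = (\<Sum>a\<in>UNIV. exp (r a / \<tau>) * (r b - r a)) / (\<Sum>a\<in>UNIV. exp (r a / \<tau>))"
    by (simp add: softmax_policy_def sum_divide_distrib)
  finally show ?thesis .
qed

lemma exp_weighted_gap_le:
  fixes r :: "'a::finite \<Rightarrow> real"
  assumes "\<tau> > 0" and "(real (card (UNIV :: 'a set)) - 1) * exp (- (w + 1)) \<le> w"
  shows "(\<Sum>a\<in>UNIV. exp (r a / \<tau>) * (r b - r a)) \<le> \<tau> * w * (\<Sum>a\<in>UNIV. exp (r a / \<tau>))"
proof -
  define E where "E = exp (r b / \<tau>)"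
  have term_le: "exp (r a / \<tau>) * (r b - r a - \<tau> * w) \<le> \<tau> * E * exp (- (w + 1))" for a
  proof -
    define d where "d = (r b - r a) / \<tau>"
    have "exp (r a / \<tau>) = E * exp (- d)"
      using assms(1) by (simp add: E_def d_def exp_add[symmetric] diff_divide_distrib)
    moreover have "r b - r a - \<tau> * w = \<tau> * (d - w)"
      using assms(1) by (simp add: d_def field_simps)
    ultimately have "exp (r a / \<tau>) * (r b - r a - \<tau> * w) = \<tau> * E * ((d - w) * exp (- d))"
      by simp
    also have "\<dots> \<le> \<tau> * E * exp (- (w + 1))"
      using assms(1) diff_mult_exp_minus_le[of d w] by (intro mult_left_mono) (auto simp: E_def)
    finally show ?thesis .
  qed
  have "(\<Sum>a\<in>UNIV - {b}. exp (r a / \<tau>) * (r b - r a - \<tau> * w))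
      \<le> (\<Sum>a\<in>UNIV - {b}. \<tau> * E * exp (- (w + 1)))"
    by (intro sum_mono term_le)
  also have "\<dots> = (real (card (UNIV :: 'a set)) - 1) * (\<tau> * E * exp (- (w + 1)))"
    by (simp add: card_Diff_singleton of_nat_diff Suc_le_eq card_gt_0_iff)
  finally have others: "(\<Sum>a\<in>UNIV - {b}. exp (r a / \<tau>) * (r b - r a - \<tau> * w))
      \<le> (real (card (UNIV :: 'a set)) - 1) * (\<tau> * E * exp (- (w + 1)))" .
  have "(\<Sum>a\<in>UNIV. exp (r a / \<tau>) * (r b - r a - \<tau> * w))
      = - \<tau> * w * E + (\<Sum>a\<in>UNIV - {b}. exp (r a / \<tau>) * (r b - r a - \<tau> * w))"
    by (simp add: sum.remove[of UNIV b] E_def)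
  also have "\<dots> \<le> - \<tau> * w * E + (real (card (UNIV :: 'a set)) - 1) * (\<tau> * E * exp (- (w + 1)))"
    using others by simp
  also have "\<dots> \<le> 0"
    using mult_left_mono[OF assms(2), of "\<tau> * E"] assms(1) by (simp add: E_def algebra_simps)
  finally show ?thesis
    by (simp add: right_diff_distrib sum_subtractf sum_distrib_left sum.distrib algebra_simps)
qed

theorem lemma14:
  fixes r :: "'a::finite \<Rightarrow> real" and \<tau> :: real and astar :: 'a
  assumes "\<forall>a. 0 \<le> r a \<and> r a \<le> 1"
    and "\<tau> > 0"
    and "\<forall>a. r a \<le> r astar"
  shows "(\<Sum>a\<in>UNIV. (det_policy astar a - softmax_policy r \<tau> a) * r a)
           \<le> \<tau> * lambertW ((real (card (UNIV :: 'a set)) - 1) / exp 1)"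
proof -
  define w where "w = lambertW ((real (card (UNIV :: 'a set)) - 1) / exp 1)"
  have "real (card (UNIV :: 'a set)) \<ge> 1" by (simp add: Suc_le_eq card_gt_0_iff)
  then have "(real (card (UNIV :: 'a set)) - 1) * exp (- (w + 1)) = w"
    unfolding w_def by (intro lambertW_fixed_point) simp
  then have "(\<Sum>a\<in>UNIV. exp (r a / \<tau>) * (r astar - r a)) \<le> \<tau> * w * (\<Sum>a\<in>UNIV. exp (r a / \<tau>))"
    using assms(2) by (intro exp_weighted_gap_le) simp_all
  moreover have "(\<Sum>a\<in>UNIV. exp (r a / \<tau>)) > 0" by (intro sum_pos) auto
  ultimately show ?thesis
    by (simp add: policy_gap_eq_softmax_weighted_gap divide_le_eq w_def)
qed

end
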